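(* Fix $y\in\mathbb{R}^d$ and measurable $g:\mathbb{R}^d\to\mathbb{R}$. Let $X,V$ be independent $\mathbb{R}^d$-valued random vectors, $Y=X+V$, where $P_V$ has a Lebesgue density $f_V$ and $\varphi_V(\omega)\neq0$ for Lebesgue-a.e. $\omega$. Assume $\lambda_{g,V,y}(x)=g(x)f_V(y-x)\in\Xi^0(\mathbb{R}^d;\mathbb{C})$, $\widetilde{\lambda}_{g,V,y}\in L^1(\mathbb{R}^d;\mathbb{C})$, and $\mathcal{Q}_{g,V,y}\in L^1(\mathbb{R}^d;\mathbb{C})$. Then for every $f\in\mathcal{A}_V(\mathbb{R}^d)$, \[ \mathcal{T}_{g,V,y}[f]=\int_{\mathbb{R}^d}\mathcal{Q}_{g,V,y}^\sharp(z)f(z)\,dz, \] where $\mathcal{Q}^\sharp_{g,V,y}$ is real-valued. In particular, whenever $f_Y(y)>0$, \[ \mathbb{E}[g(X)\mid Y=y]=\frac{1}{f_Y(y)}\int_{\mathbb{R}^d}\mathcal{Q}^\sharp_{g,V,y}(z)f_Y(z)\,dz=\frac{1}{f_Y(y)}\mathbb{E}\bigl[\mathcal{Q}^\sharp_{g,V,y}(Y)\bigr]. \]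
   Context: $\widetilde\psi(\omega)=\int e^{i\omega^\top x}\psi(x)dx$, $\psi^\sharp(x)=(2\pi)^{-d}\int e^{-i\omega^\top x}\psi(\omega)d\omega$; $\varphi_V(\omega)=\mathbb{E}[e^{i\omega^\top V}]$. $\Xi^0=C_0(\mathbb{R}^d;\mathbb{C})\cap L^1(\mathbb{R}^d;\mathbb{C})$. $\mathcal{Q}_{g,V,y}(\omega)=\widetilde{\lambda}_{g,V,y}(\omega)/\varphi_V(-\omega)$ where $\varphi_V(-\omega)\neq0$, and $0$ otherwise. $\mathcal{A}_V(\mathbb{R}^d)=\{f_V*\mu:\mu\text{ finite signed Radon measure}\}$, normed by $\|f_V*\mu\|_{\mathcal{A}_V}=\|\mu\|_{TV}$ (representing measure unique); $\mathcal{T}_{g,V,y}$ is the unique continuous linear functional on $\mathcal{A}_V$ with $\mathcal{T}_{g,V,y}[f_V*\mu]=\int\lambda_{g,V,y}\,d\mu$. $f_Y=f_V*P_X$ and $\mathbb{E}[g(X)\mid Y=y]=f_Y(y)^{-1}\int g(x)f_V(y-x)dP_X(x)$. *)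

theory Defs
  imports "HOL-Probability.Probability"
begin

definition fourier :: "('a::euclidean_space \<Rightarrow> complex) \<Rightarrow> 'a \<Rightarrow> complex" where
  "fourier \<psi> \<omega> = (LINT x|lborel. cis (\<omega> \<bullet> x) * \<psi> x)"

definition inv_fourier :: "('a::euclidean_space \<Rightarrow> complex) \<Rightarrow> 'a \<Rightarrow> complex" where
  "inv_fourier \<psi> x = complex_of_real (1 / (2 * pi) ^ DIM('a)) *
      (LINT \<omega>|lborel. cis (- (\<omega> \<bullet> x)) * \<psi> \<omega>)"

definition charfun :: "'b measure \<Rightarrow> ('b \<Rightarrow> 'a::euclidean_space) \<Rightarrow> 'a \<Rightarrow> complex" where
  "charfun M V \<omega> = (LINT m|M. cis (\<omega> \<bullet> V m))"

definition Xi0 :: "('a::euclidean_space \<Rightarrow> complex) set" where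
  "Xi0 = {\<psi>. continuous_on UNIV \<psi> \<and> (\<psi> \<longlongrightarrow> 0) at_infinity \<and> integrable lborel \<psi>}"

definition lam :: "('a::euclidean_space \<Rightarrow> real) \<Rightarrow> ('a \<Rightarrow> real) \<Rightarrow> 'a \<Rightarrow> 'a \<Rightarrow> complex" where
  "lam g fV y x = complex_of_real (g x * fV (y - x))"

definition Qfun :: "'b measure \<Rightarrow> ('b \<Rightarrow> 'a::euclidean_space) \<Rightarrow> ('a \<Rightarrow> real) \<Rightarrow> ('a \<Rightarrow> real)
     \<Rightarrow> 'a \<Rightarrow> 'a \<Rightarrow> complex" where
  "Qfun M V g fV y \<omega> =
     (if charfun M V (- \<omega>) \<noteq> 0 then fourier (lam g fV y) \<omega> / charfun M V (- \<omega>) else 0)"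

text \<open>A finite signed Borel (= Radon, on R^d) measure is represented as mu1 - mu2 with mu1, mu2
  finite Borel measures. Convolution (f_V * mu)(z) = int f_V(z - x) d mu(x).\<close>
definition conv_signed :: "('a::euclidean_space \<Rightarrow> real) \<Rightarrow> 'a measure \<Rightarrow> 'a measure \<Rightarrow> 'a \<Rightarrow> real" where
  "conv_signed fV \<mu>1 \<mu>2 z = (LINT x|\<mu>1. fV (z - x)) - (LINT x|\<mu>2. fV (z - x))"

text \<open>T_{g,V,y}[f_V * mu] = int lambda d mu.\<close>
definition T_signed :: "('a::euclidean_space \<Rightarrow> real) \<Rightarrow> ('a \<Rightarrow> real) \<Rightarrow> 'a
     \<Rightarrow> 'a measure \<Rightarrow> 'a measure \<Rightarrow> complex" where
  "T_signed g fV y \<mu>1 \<mu>2 = (LINT x|\<mu>1. lam g fV y x) - (LINT x|\<mu>2. lam g fV y x)"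

definition densY :: "'b measure \<Rightarrow> ('b \<Rightarrow> 'a::euclidean_space) \<Rightarrow> ('a \<Rightarrow> real) \<Rightarrow> 'a \<Rightarrow> real" where
  "densY M X fV z = (LINT x|distr M borel X. fV (z - x))"

definition cond_exp_at :: "'b measure \<Rightarrow> ('b \<Rightarrow> 'a::euclidean_space) \<Rightarrow> ('a \<Rightarrow> real) \<Rightarrow> ('a \<Rightarrow> real)
     \<Rightarrow> 'a \<Rightarrow> real" where
  "cond_exp_at M X fV g y = (1 / densY M X fV y) * (LINT x|distr M borel X. g x * fV (y - x))"

end

theory Submission
  imports Defs
begin

text \<open>Write \<open>q\<close> for the inverse Fourier transform of \<open>Q\<close>. Wherever \<open>\<phi>\<^sub>V(-\<omega>) \<noteq> 0\<close>, the product
  \<open>Q(\<omega>) \<phi>\<^sub>V(-\<omega>)\<close> is the Fourier transform of \<open>\<lambda>\<close>; since this holds almost everywhere, Fubini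
  and Fourier inversion (proved by Gaussian summability) give \<open>E[q(x + V)] = \<lambda>(x)\<close> for every \<open>x\<close>.
  Integrating this identity against \<open>\<mu>\<close> and applying Fubini once more with the density \<open>f\<^sub>V\<close> turns
  \<open>\<integral> q (f\<^sub>V * \<mu>)\<close> into \<open>\<integral> \<lambda> d\<mu>\<close>; for \<open>\<mu> = P\<^sub>X\<close>, independence of \<open>X\<close> and \<open>V\<close> gives the
  expectation form. Finally \<open>Q\<close> is Hermitian because \<open>\<lambda>\<close> and \<open>f\<^sub>V\<close> are real, so \<open>q\<close> is real.\<close>

lemma
  fixes f :: "'a::euclidean_space \<Rightarrow> 'b::{banach, second_countable_topology}"
  assumes c: "c \<noteq> 0" and f[measurable]: "f \<in> borel_measurable borel"
  shows lborel_integral_affine: "integral\<^sup>L lborel f = \<bar>c\<bar>^DIM('a) *\<^sub>R (\<integral>x. f (t + c *\<^sub>R x) \<partial>lborel)"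
    and lborel_integrable_affine_iff: "integrable lborel (\<lambda>x. f (t + c *\<^sub>R x)) \<longleftrightarrow> integrable lborel f"
proof -
  have lborel_eq: "lborel = density (distr lborel borel (\<lambda>x. t + c *\<^sub>R x)) (\<lambda>_. \<bar>c\<bar>^DIM('a))"
    using lborel_affine[OF c, of t] by simp
  have "integral\<^sup>L lborel f = integral\<^sup>L (distr lborel borel (\<lambda>x::'a. t + c *\<^sub>R x)) (\<lambda>x. \<bar>c\<bar>^DIM('a) *\<^sub>R f x)"
    by (subst lborel_eq) (subst integral_density; auto)
  also have "\<dots> = (\<integral>x. \<bar>c\<bar>^DIM('a) *\<^sub>R f (t + c *\<^sub>R x) \<partial>lborel)"
    by (subst integral_distr) auto
  finally show "integral\<^sup>L lborel f = \<bar>c\<bar>^DIM('a) *\<^sub>R (\<integral>x. f (t + c *\<^sub>R x) \<partial>lborel)" by simp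
  have "integrable lborel f \<longleftrightarrow> integrable (distr lborel borel (\<lambda>x::'a. t + c *\<^sub>R x)) (\<lambda>x. \<bar>c\<bar>^DIM('a) *\<^sub>R f x)"
    by (subst lborel_eq) (subst integrable_density; auto)
  also have "\<dots> \<longleftrightarrow> integrable lborel (\<lambda>x. \<bar>c\<bar>^DIM('a) *\<^sub>R f (t + c *\<^sub>R x))"
    by (subst integrable_distr_eq) auto
  also have "\<dots> \<longleftrightarrow> integrable lborel (\<lambda>x. f (t + c *\<^sub>R x))"
  proof
    assume "integrable lborel (\<lambda>x. \<bar>c\<bar>^DIM('a) *\<^sub>R f (t + c *\<^sub>R x))"
    then have "integrable lborel (\<lambda>x. (1 / \<bar>c\<bar>^DIM('a)) *\<^sub>R (\<bar>c\<bar>^DIM('a) *\<^sub>R f (t + c *\<^sub>R x)))"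
      by (rule integrable_scaleR_right)
    then show "integrable lborel (\<lambda>x. f (t + c *\<^sub>R x))"
      using c by simp
  qed (rule integrable_scaleR_right)
  finally show "integrable lborel (\<lambda>x. f (t + c *\<^sub>R x)) \<longleftrightarrow> integrable lborel f" ..
qed

lemma
  fixes f :: "'a::euclidean_space \<Rightarrow> 'b::{banach, second_countable_topology}"
  assumes f: "f \<in> borel_measurable borel"
  shows lborel_integral_translate: "(\<integral>z. f (z + a) \<partial>lborel) = integral\<^sup>L lborel f"
    and lborel_integrable_translate_iff: "integrable lborel (\<lambda>z. f (z + a)) \<longleftrightarrow> integrable lborel f"
  using lborel_integral_affine[OF one_neq_zero f, of a] lborel_integrable_affine_iff[OF one_neq_zero f, of a]
  by (simp_all add: add.commute)

lemma bounded_range_C0: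
  fixes \<psi> :: "'a::{real_normed_vector, heine_borel} \<Rightarrow> 'b::real_normed_vector"
  assumes cont: "continuous_on UNIV \<psi>" and lim: "(\<psi> \<longlongrightarrow> 0) at_infinity"
  shows "bounded (range \<psi>)"
proof -
  have "\<forall>\<^sub>F x in at_infinity. norm (\<psi> x) < 1"
    using lim by (simp add: tendsto_iff dist_norm)
  then obtain b where b: "\<And>x. norm x \<ge> b \<Longrightarrow> norm (\<psi> x) < 1"
    unfolding eventually_at_infinity by blast
  have "\<psi> x \<in> \<psi> ` cball 0 b \<union> cball 0 1" for x
    using b[of x] by (cases "norm x \<ge> b") auto
  then have "range \<psi> \<subseteq> \<psi> ` cball 0 b \<union> cball 0 1"
    by blast
  moreover have "bounded (\<psi> ` cball 0 b)"
    by (intro compact_imp_bounded compact_continuous_image continuous_on_subset[OF cont]) auto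
  ultimately show ?thesis
    by (meson bounded_Un bounded_cball bounded_subset)
qed

section \<open>Gaussian integrals\<close>

lemma has_bochner_integral_cis_gaussian_real:
  fixes a c :: real assumes c: "c > 0"
  shows "has_bochner_integral lborel (\<lambda>t. cis (t * a) * complex_of_real (exp (- (t^2) / (2 * c^2))))
           (complex_of_real (c * sqrt (2 * pi) * exp (- ((c * a)^2) / 2)))"
proof -
  let ?f = "\<lambda>x. std_normal_density x *\<^sub>R iexp (c * a * x)"
  have "integrable lborel ?f"
  proof (rule Bochner_Integration.integrable_bound[where f="\<lambda>x. std_normal_density x"])
    show "integrable lborel std_normal_density"
      using integrable_std_normal_moment_abs[of 0] by simp
  qed (auto simp: norm_mult normal_density_nonneg)
  moreover have "integral\<^sup>L lborel ?f = char std_normal_distribution (c * a)"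
    unfolding char_def by (subst integral_density) (auto simp: normal_density_nonneg)
  ultimately have "has_bochner_integral lborel ?f (exp (- ((c * a)^2) / 2))"
    by (simp add: has_bochner_integral_iff char_std_normal_distribution)
  then have "has_bochner_integral lborel (\<lambda>x. complex_of_real (sqrt (2 * pi)) * ?f x)
      (complex_of_real (sqrt (2 * pi)) * exp (- ((c * a)^2) / 2))"
    by (rule has_bochner_integral_mult_right)
  moreover have "complex_of_real (sqrt (2 * pi)) * ?f x
      = cis ((0 + c * x) * a) * complex_of_real (exp (- ((0 + c * x)^2) / (2 * c^2)))" for x
    using c by (auto simp: std_normal_density_def cis_conv_exp scaleR_conv_of_real power_mult_distrib mult_ac)
  ultimately have "has_bochner_integral lborel (\<lambda>x. cis ((0 + c * x) * a) * complex_of_real (exp (- ((0 + c * x)^2) / (2 * c^2))))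
      (complex_of_real (sqrt (2 * pi)) * exp (- ((c * a)^2) / 2))"
    by simp
  then have "has_bochner_integral lborel (\<lambda>t. cis (t * a) * complex_of_real (exp (- (t^2) / (2 * c^2))))
      (\<bar>c\<bar> *\<^sub>R (complex_of_real (sqrt (2 * pi)) * exp (- ((c * a)^2) / 2)))"
    using c by (subst lborel_has_bochner_integral_real_affine_iff[where c=c and t=0]) auto
  then show ?thesis
    using c by (simp add: scaleR_conv_of_real field_simps)
qed

lemma cis_sum: "finite I \<Longrightarrow> cis (sum f I) = (\<Prod>i\<in>I. cis (f i))"
  by (induction I rule: finite_induct) (auto simp: cis_mult[symmetric])

lemma borel_measurable_cis[measurable]: "cis \<in> borel_measurable borel"
  by (intro borel_measurable_continuous_onI continuous_intros)

text \<open>The Gaussian factorises over an orthonormal basis, so the product measure reduces the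
  computation to the one-dimensional case.\<close>

lemma has_bochner_integral_cis_gaussian:
  fixes s :: "'a::euclidean_space" and c :: real assumes c: "c > 0"
  shows "has_bochner_integral lborel (\<lambda>w::'a. cis (w \<bullet> s) * complex_of_real (exp (- ((norm w)^2) / (2 * c^2))))
           (complex_of_real ((c * sqrt (2 * pi))^DIM('a) * exp (- (c^2 * (norm s)^2) / 2)))"
proof -
  interpret P: product_sigma_finite "\<lambda>_::'a. lborel::real measure" by standard
  define h where "h b t = cis (t * (b \<bullet> s)) * complex_of_real (exp (- (t^2) / (2 * c^2)))" for b :: 'a and t :: real
  have h_integral: "has_bochner_integral lborel (h b) (complex_of_real (c * sqrt (2 * pi) * exp (- ((c * (b \<bullet> s))^2) / 2)))" for b
    unfolding h_def by (rule has_bochner_integral_cis_gaussian_real[OF c])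
  have factorise: "cis ((\<Sum>b\<in>Basis. x b *\<^sub>R b) \<bullet> s) * complex_of_real (exp (- ((norm (\<Sum>b\<in>Basis. x b *\<^sub>R b))^2) / (2 * c^2)))
      = (\<Prod>b\<in>Basis. h b (x b))" for x :: "'a \<Rightarrow> real"
  proof -
    have inner: "(\<Sum>b\<in>Basis. x b *\<^sub>R b) \<bullet> s = (\<Sum>b\<in>Basis. x b * (b \<bullet> s))"
      by (simp add: inner_sum_left)
    have norm: "(norm (\<Sum>b\<in>Basis. x b *\<^sub>R b))^2 = (\<Sum>b\<in>Basis. (x b)^2)"
      unfolding power2_norm_eq_inner
      by (simp add: inner_sum_left inner_sum_right inner_Basis if_distrib sum.delta power2_eq_square cong: if_cong)
    show ?thesis
      unfolding inner norm h_def prod.distrib cis_sum[OF finite_Basis]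
      by (simp add: exp_sum[symmetric] sum_divide_distrib[symmetric] sum_negf[symmetric] of_real_prod[symmetric] del: of_real_prod)
        (simp add: sum_divide_distrib[symmetric] sum_negf)
  qed
  have product_integrable: "integrable (Pi\<^sub>M Basis (\<lambda>_. lborel)) (\<lambda>x. \<Prod>b\<in>Basis. h b (x b))"
    using h_integral by (intro P.product_integrable_prod) (auto simp: has_bochner_integral_iff)
  have "(\<integral>x. (\<Prod>b\<in>Basis. h b (x b)) \<partial>Pi\<^sub>M Basis (\<lambda>_. lborel))
      = (\<Prod>b\<in>Basis. complex_of_real (c * sqrt (2 * pi) * exp (- ((c * (b \<bullet> s))^2) / 2)))"
    using h_integral by (subst P.product_integral_prod) (auto simp: has_bochner_integral_iff)
  also have "\<dots> = complex_of_real ((c * sqrt (2 * pi))^DIM('a) * exp (- (c^2 * (norm s)^2) / 2))"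
  proof -
    have "(norm s)^2 = (\<Sum>b\<in>(Basis::'a set). (b \<bullet> s)^2)"
      unfolding power2_norm_eq_inner by (simp add: euclidean_inner[of s s] power2_eq_square inner_commute)
    then show ?thesis
      by (simp add: prod.distrib exp_sum[symmetric] power_mult_distrib sum_divide_distrib[symmetric] sum_negf[symmetric]
          sum_distrib_left[symmetric] of_real_prod[symmetric] del: of_real_prod)
        (simp add: sum_negf sum_divide_distrib[symmetric] sum_distrib_left[symmetric])
  qed
  finally have "has_bochner_integral (distr (Pi\<^sub>M Basis (\<lambda>_. lborel)) borel (\<lambda>f. \<Sum>b\<in>Basis. f b *\<^sub>R b))
      (\<lambda>w::'a. cis (w \<bullet> s) * complex_of_real (exp (- ((norm w)^2) / (2 * c^2))))
      (complex_of_real ((c * sqrt (2 * pi))^DIM('a) * exp (- (c^2 * (norm s)^2) / 2)))"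
    unfolding has_bochner_integral_iff
    by (subst integrable_distr_eq integral_distr, measurable)+ (use product_integrable factorise in simp)
  then show ?thesis by (simp add: lborel_eq[symmetric])
qed

lemma integrable_gaussian:
  assumes "c > 0"
  shows "integrable lborel (\<lambda>w::'a::euclidean_space. exp (- ((norm w)^2) / (2 * c^2)))"
proof -
  have "complex_integrable lborel (\<lambda>w::'a. complex_of_real (exp (- ((norm w)^2) / (2 * c^2))))"
    using has_bochner_integral_cis_gaussian[OF assms, of "0::'a"] by (simp add: has_bochner_integral_iff)
  then show ?thesis
    by (simp add: complex_of_real_integrable_eq)
qed

lemma integral_gaussian:
  "(\<integral>w. exp (- ((norm (w::'a::euclidean_space))^2) / 2) \<partial>lborel) = sqrt (2 * pi) ^ DIM('a)"
proof -
  have "has_bochner_integral lborel (\<lambda>w::'a. Re (cis (w \<bullet> 0) * complex_of_real (exp (- ((norm w)^2) / (2 * 1^2)))))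
      (Re (complex_of_real ((1 * sqrt (2 * pi))^DIM('a) * exp (- (1^2 * (norm (0::'a))^2) / 2))))"
    by (intro has_bochner_integral_Re has_bochner_integral_cis_gaussian) simp
  then show ?thesis by (simp add: has_bochner_integral_iff)
qed

lemma fourier_modulated_gaussian:
  fixes x :: "'a::euclidean_space" assumes c: "c > 0"
  shows "fourier (\<lambda>w. cis (- (w \<bullet> x)) * complex_of_real (exp (- ((norm w)^2) / (2 * c^2)))) t
       = complex_of_real ((c * sqrt (2 * pi))^DIM('a) * exp (- (c^2 * (norm (t - x))^2) / 2))"
proof -
  have "(\<lambda>w. cis (t \<bullet> w) * (cis (- (w \<bullet> x)) * complex_of_real (exp (- ((norm w)^2) / (2 * c^2)))))
      = (\<lambda>w. cis (w \<bullet> (t - x)) * complex_of_real (exp (- ((norm w)^2) / (2 * c^2))))"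
    by (simp add: inner_diff_right inner_commute cis_mult mult.assoc[symmetric])
  then show ?thesis
    using has_bochner_integral_cis_gaussian[OF c, of "t - x"]
    unfolding fourier_def by (simp add: has_bochner_integral_iff)
qed

section \<open>Fourier inversion\<close>

lemma fourier_multiplication_formula:
  fixes \<psi> \<phi> :: "'a::euclidean_space \<Rightarrow> complex"
  assumes \<psi>: "integrable lborel \<psi>" and \<phi>: "integrable lborel \<phi>"
  shows "(\<integral>w. fourier \<psi> w * \<phi> w \<partial>lborel) = (\<integral>t. \<psi> t * fourier \<phi> t \<partial>lborel)"
proof -
  have [measurable]: "\<psi> \<in> borel_measurable borel" "\<phi> \<in> borel_measurable borel"
    using \<psi> \<phi> by (simp_all add: borel_measurable_integrable)
  define f where "f w t = \<phi> w * (cis (w \<bullet> t) * \<psi> t)" for w t :: 'a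
  have "integrable (lborel \<Otimes>\<^sub>M lborel) (\<lambda>(w, t). f w t)"
  proof (rule lborel_pair.Fubini_integrable)
    show "(\<lambda>(w, t). f w t) \<in> borel_measurable (lborel \<Otimes>\<^sub>M lborel)"
      unfolding f_def by measurable
    show "integrable lborel (\<lambda>w. \<integral>t. norm ((\<lambda>(w, t). f w t) (w, t)) \<partial>lborel)"
      using \<phi> by (simp add: f_def norm_mult)
    show "AE w in lborel. integrable lborel (\<lambda>t. (\<lambda>(w, t). f w t) (w, t))"
      unfolding case_prod_conv f_def
      by (intro AE_I2 integrable_mult_right Bochner_Integration.integrable_bound[OF \<psi>]) (auto simp: norm_mult)
  qed
  then have "(\<integral>t. (\<integral>w. f w t \<partial>lborel) \<partial>lborel) = (\<integral>w. (\<integral>t. f w t \<partial>lborel) \<partial>lborel)"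
    by (rule lborel_pair.Fubini_integral)
  moreover have "(\<integral>t. f w t \<partial>lborel) = fourier \<psi> w * \<phi> w" for w
    unfolding f_def fourier_def by (simp add: mult_ac)
  moreover have "(\<integral>w. f w t \<partial>lborel) = \<psi> t * fourier \<phi> t" for t
  proof -
    have "(\<lambda>w. f w t) = (\<lambda>w. \<psi> t * (cis (t \<bullet> w) * \<phi> w))"
      by (auto simp: f_def inner_commute mult_ac)
    then show ?thesis
      unfolding fourier_def by simp
  qed
  ultimately show ?thesis by simp
qed

text \<open>Damping the inverse transform by a Gaussian of width \<open>c\<close> turns it, via the multiplication
  formula, into an average of \<open>\<psi>\<close> against a Gaussian of width \<open>1 / c\<close> centred at \<open>x\<close>.\<close>

lemma inv_fourier_gaussian_damped:
  fixes \<psi> :: "'a::euclidean_space \<Rightarrow> complex"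
  assumes \<psi>: "integrable lborel \<psi>" and c: "c > 0"
  shows "(\<integral>w. cis (- (w \<bullet> x)) * fourier \<psi> w * complex_of_real (exp (- ((norm w)^2) / (2 * c^2))) \<partial>lborel)
       = complex_of_real (sqrt (2 * pi) ^ DIM('a))
         * (\<integral>u. \<psi> (x + (1 / c) *\<^sub>R u) * complex_of_real (exp (- ((norm u)^2) / 2)) \<partial>lborel)"
proof -
  have [measurable]: "\<psi> \<in> borel_measurable borel"
    using \<psi> by (simp add: borel_measurable_integrable)
  define \<phi> where "\<phi> w = cis (- (w \<bullet> x)) * complex_of_real (exp (- ((norm w)^2) / (2 * c^2)))" for w :: 'a
  define K where "K s = complex_of_real ((c * sqrt (2 * pi))^DIM('a) * exp (- (c^2 * (norm s)^2) / 2))" for s :: 'a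
  have \<phi>_integrable: "integrable lborel \<phi>"
    unfolding \<phi>_def
    by (rule Bochner_Integration.integrable_bound[OF integrable_gaussian[OF c]]) (auto simp: norm_mult)
  have fourier_\<phi>: "fourier \<phi> t = K (t - x)" for t
    unfolding \<phi>_def K_def by (rule fourier_modulated_gaussian[OF c])
  have "(\<integral>w. cis (- (w \<bullet> x)) * fourier \<psi> w * complex_of_real (exp (- ((norm w)^2) / (2 * c^2))) \<partial>lborel)
      = (\<integral>w. fourier \<psi> w * \<phi> w \<partial>lborel)"
    unfolding \<phi>_def by (simp add: mult_ac)
  also have "\<dots> = (\<integral>t. \<psi> t * K (t - x) \<partial>lborel)"
    unfolding fourier_multiplication_formula[OF \<psi> \<phi>_integrable] fourier_\<phi> ..
  also have "\<dots> = \<bar>1 / c\<bar>^DIM('a) *\<^sub>R (\<integral>u. \<psi> (x + (1 / c) *\<^sub>R u) * K ((x + (1 / c) *\<^sub>R u) - x) \<partial>lborel)"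
    using c by (intro lborel_integral_affine) (auto simp: K_def)
  also have "\<dots> = \<bar>1 / c\<bar>^DIM('a) *\<^sub>R (complex_of_real ((c * sqrt (2 * pi)) ^ DIM('a))
         * (\<integral>u. \<psi> (x + (1 / c) *\<^sub>R u) * complex_of_real (exp (- ((norm u)^2) / 2)) \<partial>lborel))"
  proof -
    have "c^2 * (norm ((1 / c) *\<^sub>R u))^2 = (norm u)^2" for u :: 'a
      using c by (simp add: power_divide)
    then have "\<psi> (x + (1 / c) *\<^sub>R u) * K ((x + (1 / c) *\<^sub>R u) - x)
        = complex_of_real ((c * sqrt (2 * pi)) ^ DIM('a)) * (\<psi> (x + (1 / c) *\<^sub>R u) * complex_of_real (exp (- ((norm u)^2) / 2)))" for u
      by (simp add: K_def mult.left_commute)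
    then show ?thesis
      by (simp only: integral_mult_right_zero)
  qed
  also have "\<dots> = complex_of_real (\<bar>1 / c\<bar>^DIM('a) * (c * sqrt (2 * pi)) ^ DIM('a))
         * (\<integral>u. \<psi> (x + (1 / c) *\<^sub>R u) * complex_of_real (exp (- ((norm u)^2) / 2)) \<partial>lborel)"
    by (simp only: scaleR_conv_of_real of_real_mult mult.assoc)
  also have "\<bar>1 / c\<bar>^DIM('a) * (c * sqrt (2 * pi)) ^ DIM('a) = sqrt (2 * pi) ^ DIM('a)"
    using c by (simp flip: power_mult_distrib)
  finally show ?thesis .
qed

lemma tendsto_integral_gaussian_damped:
  fixes F :: "'a::euclidean_space \<Rightarrow> complex"
  assumes F: "integrable lborel F"
  shows "(\<lambda>n. \<integral>w. F w * complex_of_real (exp (- ((norm w)^2) / (2 * (real (Suc n))^2))) \<partial>lborel)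
           \<longlonglongrightarrow> integral\<^sup>L lborel F"
proof -
  have [measurable]: "F \<in> borel_measurable borel"
    using F by (simp add: borel_measurable_integrable)
  show ?thesis
  proof (rule integral_dominated_convergence[where w="\<lambda>w. norm (F w)"])
    show "AE w in lborel. (\<lambda>n. F w * complex_of_real (exp (- ((norm w)^2) / (2 * (real (Suc n))^2)))) \<longlonglongrightarrow> F w"
    proof (intro AE_I2)
      fix w :: 'a
      have "(\<lambda>n. exp (- ((norm w)^2 / 2) * (inverse (real (Suc n)))^2)) \<longlonglongrightarrow> exp (- ((norm w)^2 / 2) * 0^2)"
        by (intro tendsto_intros LIMSEQ_inverse_real_of_nat)
      moreover have "(\<lambda>n. exp (- ((norm w)^2) / (2 * (real (Suc n))^2)))
          = (\<lambda>n. exp (- ((norm w)^2 / 2) * (inverse (real (Suc n)))^2))"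
        by (simp add: field_simps power2_eq_square)
      ultimately have "(\<lambda>n. exp (- ((norm w)^2) / (2 * (real (Suc n))^2))) \<longlonglongrightarrow> 1"
        by simp
      then have "(\<lambda>n. complex_of_real (exp (- ((norm w)^2) / (2 * (real (Suc n))^2)))) \<longlonglongrightarrow> 1"
        by (metis of_real_1 tendsto_of_real)
      then show "(\<lambda>n. F w * complex_of_real (exp (- ((norm w)^2) / (2 * (real (Suc n))^2)))) \<longlonglongrightarrow> F w"
        using tendsto_mult[OF tendsto_const] by fastforce
    qed
    show "AE w in lborel. norm (F w * complex_of_real (exp (- ((norm w)^2) / (2 * (real (Suc n))^2)))) \<le> norm (F w)" for n
      by (intro AE_I2) (auto simp: norm_mult intro!: mult_right_le_one_le)
  qed (use F in simp_all)
qed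

lemma tendsto_integral_gaussian_mollified:
  fixes \<psi> :: "'a::euclidean_space \<Rightarrow> complex"
  assumes cont: "continuous_on UNIV \<psi>" and bounded: "bounded (range \<psi>)"
  shows "(\<lambda>n. \<integral>u. \<psi> (x + (1 / real (Suc n)) *\<^sub>R u) * complex_of_real (exp (- ((norm u)^2) / 2)) \<partial>lborel)
           \<longlonglongrightarrow> \<psi> x * complex_of_real (sqrt (2 * pi) ^ DIM('a))"
proof -
  obtain B where B: "\<And>z. norm (\<psi> z) \<le> B"
    using bounded by (auto simp: bounded_iff)
  have [measurable]: "\<psi> \<in> borel_measurable borel"
    using cont by (rule borel_measurable_continuous_onI)
  have gaussian: "integrable lborel (\<lambda>u::'a. exp (- ((norm u)^2) / 2))"
    using integrable_gaussian[of 1] by simp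
  have "(\<lambda>n. \<integral>u. \<psi> (x + (1 / real (Suc n)) *\<^sub>R u) * complex_of_real (exp (- ((norm u)^2) / 2)) \<partial>lborel)
      \<longlonglongrightarrow> (\<integral>u. \<psi> x * complex_of_real (exp (- ((norm (u::'a))^2) / 2)) \<partial>lborel)"
  proof (rule integral_dominated_convergence[where w="\<lambda>u. B * exp (- ((norm u)^2) / 2)"])
    show "integrable lborel (\<lambda>u::'a. B * exp (- ((norm u)^2) / 2))"
      using gaussian by simp
    show "AE u in lborel. (\<lambda>n. \<psi> (x + (1 / real (Suc n)) *\<^sub>R u) * complex_of_real (exp (- ((norm u)^2) / 2)))
        \<longlonglongrightarrow> \<psi> x * complex_of_real (exp (- ((norm u)^2) / 2))"
    proof (intro AE_I2 tendsto_mult tendsto_const)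
      fix u :: 'a
      have "(\<lambda>n. x + (1 / real (Suc n)) *\<^sub>R u) \<longlonglongrightarrow> x + 0 *\<^sub>R u"
        using LIMSEQ_inverse_real_of_nat by (intro tendsto_intros) (simp add: inverse_eq_divide)
      then have "(\<lambda>n. x + (1 / real (Suc n)) *\<^sub>R u) \<longlonglongrightarrow> x"
        by simp
      moreover have "isCont \<psi> x"
        using cont by (simp add: continuous_on_eq_continuous_at)
      ultimately show "(\<lambda>n. \<psi> (x + (1 / real (Suc n)) *\<^sub>R u)) \<longlonglongrightarrow> \<psi> x"
        by (rule isCont_tendsto_compose[rotated])
    qed
    show "AE u in lborel. norm (\<psi> (x + (1 / real (Suc n)) *\<^sub>R u) * complex_of_real (exp (- ((norm u)^2) / 2)))
        \<le> B * exp (- ((norm u)^2) / 2)" for n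
      by (intro AE_I2) (auto simp: norm_mult intro!: mult_right_mono B)
  qed measurable
  then show ?thesis
    by (simp only: integral_mult_right_zero integral_complex_of_real integral_gaussian)
qed

text \<open>Inversion is the limit of the two sides of \<open>inv_fourier_gaussian_damped\<close> as the width grows.\<close>

lemma fourier_inversion:
  assumes \<psi>: "\<psi> \<in> Xi0" and F: "integrable lborel (fourier \<psi>)"
  shows "inv_fourier (fourier \<psi>) x = \<psi> x"
proof -
  have cont: "continuous_on UNIV \<psi>" and lim: "(\<psi> \<longlongrightarrow> 0) at_infinity" and int: "integrable lborel \<psi>"
    using \<psi> by (simp_all add: Xi0_def)
  have bounded: "bounded (range \<psi>)"
    using cont lim by (rule bounded_range_C0)
  have [measurable]: "fourier \<psi> \<in> borel_measurable borel"
    using F by (simp add: borel_measurable_integrable)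
  define S where "S = complex_of_real (sqrt (2 * pi) ^ DIM('a))"
  define L where "L = (\<integral>w. cis (- (w \<bullet> x)) * fourier \<psi> w \<partial>lborel)"
  have "integrable lborel (\<lambda>w. cis (- (w \<bullet> x)) * fourier \<psi> w)"
    by (rule Bochner_Integration.integrable_bound[OF F]) (auto simp: norm_mult)
  then have "(\<lambda>n. \<integral>w. cis (- (w \<bullet> x)) * fourier \<psi> w * complex_of_real (exp (- ((norm w)^2) / (2 * (real (Suc n))^2))) \<partial>lborel)
      \<longlonglongrightarrow> L"
    unfolding L_def by (rule tendsto_integral_gaussian_damped)
  moreover have "(\<lambda>n. \<integral>w. cis (- (w \<bullet> x)) * fourier \<psi> w * complex_of_real (exp (- ((norm w)^2) / (2 * (real (Suc n))^2))) \<partial>lborel)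
      \<longlonglongrightarrow> S * (\<psi> x * S)"
    unfolding inv_fourier_gaussian_damped[OF int of_nat_0_less_iff[THEN iffD2, OF zero_less_Suc]] S_def
    by (intro tendsto_mult_left tendsto_integral_gaussian_mollified cont bounded)
  ultimately have "L = S * (\<psi> x * S)"
    by (rule LIMSEQ_unique)
  moreover have "sqrt (2 * pi) ^ DIM('a) * sqrt (2 * pi) ^ DIM('a) = (2 * pi) ^ DIM('a)"
    unfolding power_mult_distrib[symmetric] by simp
  then have "S * S = complex_of_real ((2 * pi) ^ DIM('a))"
    unfolding S_def of_real_mult[symmetric] by (rule arg_cong)
  ultimately have "L = complex_of_real ((2 * pi) ^ DIM('a)) * \<psi> x"
    by algebra
  moreover have "complex_of_real (1 / (2 * pi) ^ DIM('a)) * complex_of_real ((2 * pi) ^ DIM('a)) = 1"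
    by (simp flip: of_real_mult)
  ultimately show ?thesis
    unfolding inv_fourier_def L_def[symmetric] by (simp only: mult.assoc[symmetric]) simp
qed

lemma norm_inv_fourier_le:
  fixes Q :: "'a::euclidean_space \<Rightarrow> complex"
  shows "norm (inv_fourier Q z) \<le> (\<integral>w. norm (Q w) \<partial>lborel) / (2 * pi) ^ DIM('a)"
proof -
  have "norm (\<integral>w. cis (- (w \<bullet> z)) * Q w \<partial>lborel) \<le> (\<integral>w. norm (Q w) \<partial>lborel)"
    using integral_norm_bound[of lborel "\<lambda>w. cis (- (w \<bullet> z)) * Q w"] by (simp add: norm_mult)
  then show ?thesis
    unfolding inv_fourier_def norm_mult norm_of_real by (simp add: divide_right_mono)
qed

lemma Im_inv_fourier_eq_0:
  fixes Q :: "'a::euclidean_space \<Rightarrow> complex"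
  assumes [measurable]: "Q \<in> borel_measurable borel" and hermitian: "\<And>w. Q (- w) = cnj (Q w)"
  shows "Im (inv_fourier Q z) = 0"
proof -
  define J where "J = (\<integral>w. cis (- (w \<bullet> z)) * Q w \<partial>lborel)"
  have "J = (\<integral>w. cis (- ((- w) \<bullet> z)) * Q (- w) \<partial>lborel)"
    unfolding J_def using lborel_integral_affine[of "-1" "\<lambda>w. cis (- (w \<bullet> z)) * Q w" 0] by simp
  also have "\<dots> = (\<integral>w. cnj (cis (- (w \<bullet> z)) * Q w) \<partial>lborel)"
    unfolding hermitian by (simp add: cis_cnj)
  also have "\<dots> = cnj J"
    unfolding J_def by (rule Bochner_Integration.integral_cnj)
  finally have "Im J = Im (cnj J)"
    by (rule arg_cong)
  then have "Im J = 0"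
    by simp
  then show ?thesis
    unfolding inv_fourier_def J_def[symmetric] by simp
qed

section \<open>Deconvolution\<close>

lemma charfun_uminus: "charfun M V (- \<omega>) = cnj (charfun M V \<omega>)"
proof -
  have "cnj (charfun M V \<omega>) = (\<integral>m. cnj (cis (\<omega> \<bullet> V m)) \<partial>M)"
    unfolding charfun_def by (rule Bochner_Integration.integral_cnj[symmetric])
  then show ?thesis
    unfolding charfun_def by (simp add: cis_cnj)
qed

lemma fourier_uminus_of_real:
  "fourier (\<lambda>x. complex_of_real (h x)) (- \<omega>) = cnj (fourier (\<lambda>x. complex_of_real (h x)) \<omega>)"
proof -
  have "cnj (fourier (\<lambda>x. complex_of_real (h x)) \<omega>) = (\<integral>x. cnj (cis (\<omega> \<bullet> x) * complex_of_real (h x)) \<partial>lborel)"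
    unfolding fourier_def by (rule Bochner_Integration.integral_cnj[symmetric])
  then show ?thesis
    unfolding fourier_def by (simp add: cis_cnj)
qed

lemma Qfun_uminus: "Qfun M V g fV y (- \<omega>) = cnj (Qfun M V g fV y \<omega>)"
  using fourier_uminus_of_real[of "\<lambda>x. g x * fV (y - x)" \<omega>]
  by (simp add: Qfun_def lam_def[abs_def] charfun_uminus[of M V])

lemma Qfun_mult_charfun:
  "charfun M V (- \<omega>) \<noteq> 0 \<Longrightarrow> Qfun M V g fV y \<omega> * charfun M V (- \<omega>) = fourier (lam g fV y) \<omega>"
  by (simp add: Qfun_def)

lemma integral_inv_fourier_translate:
  fixes V :: "'b \<Rightarrow> 'a::euclidean_space" and Q :: "'a \<Rightarrow> complex"
  assumes M: "prob_space M" and [measurable]: "V \<in> borel_measurable M" and Q: "integrable lborel Q"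
  shows "(\<integral>m. inv_fourier Q (x + V m) \<partial>M) = inv_fourier (\<lambda>\<omega>. Q \<omega> * charfun M V (- \<omega>)) x"
proof -
  interpret prob_space M by (rule M)
  interpret M_lborel: pair_sigma_finite M "lborel :: 'a measure"
    by (intro pair_sigma_finite.intro sigma_finite_measure_axioms lborel.sigma_finite_measure_axioms)
  have [measurable]: "Q \<in> borel_measurable borel"
    using Q by (simp add: borel_measurable_integrable)
  define F where "F m w = cis (- (w \<bullet> (x + V m))) * Q w" for m w
  have "integrable (M \<Otimes>\<^sub>M lborel) (\<lambda>(m, w). F m w)"
  proof (rule M_lborel.Fubini_integrable)
    show "(\<lambda>(m, w). F m w) \<in> borel_measurable (M \<Otimes>\<^sub>M lborel)"
      unfolding F_def by measurable
    show "integrable M (\<lambda>m. \<integral>w. norm ((\<lambda>(m, w). F m w) (m, w)) \<partial>lborel)"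
      by (simp add: F_def norm_mult)
    show "AE m in M. integrable lborel (\<lambda>w. (\<lambda>(m, w). F m w) (m, w))"
      unfolding case_prod_conv F_def
      by (intro AE_I2 Bochner_Integration.integrable_bound[OF Q]) (auto simp: norm_mult)
  qed
  then have Fubini: "(\<integral>m. (\<integral>w. F m w \<partial>lborel) \<partial>M) = (\<integral>w. (\<integral>m. F m w \<partial>M) \<partial>lborel)"
    by (rule M_lborel.Fubini_integral[symmetric])
  have slice: "(\<integral>m. F m w \<partial>M) = cis (- (w \<bullet> x)) * (Q w * charfun M V (- w))" for w
  proof -
    have "F m w = cis (- (w \<bullet> x)) * Q w * cis ((- w) \<bullet> V m)" for m
      unfolding F_def by (simp add: inner_add_right cis_mult mult_ac)
    then show ?thesis
      unfolding charfun_def by (simp add: mult_ac)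
  qed
  have "(\<integral>m. inv_fourier Q (x + V m) \<partial>M)
      = complex_of_real (1 / (2 * pi) ^ DIM('a)) * (\<integral>m. (\<integral>w. F m w \<partial>lborel) \<partial>M)"
    unfolding inv_fourier_def F_def by simp
  also have "\<dots> = inv_fourier (\<lambda>\<omega>. Q \<omega> * charfun M V (- \<omega>)) x"
    unfolding Fubini slice inv_fourier_def ..
  finally show ?thesis .
qed

lemma integral_inv_fourier_deconvolution:
  fixes V :: "'b \<Rightarrow> 'a::euclidean_space" and Q \<psi> :: "'a \<Rightarrow> complex"
  assumes M: "prob_space M" and [measurable]: "V \<in> borel_measurable M"
    and charfun_nonzero: "AE \<omega> in lborel. charfun M V \<omega> \<noteq> 0"
    and \<psi>: "\<psi> \<in> Xi0" "integrable lborel (fourier \<psi>)" and Q: "integrable lborel Q"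
    and deconvolves: "\<And>\<omega>. charfun M V (- \<omega>) \<noteq> 0 \<Longrightarrow> Q \<omega> * charfun M V (- \<omega>) = fourier \<psi> \<omega>"
  shows "(\<integral>m. inv_fourier Q (x + V m) \<partial>M) = \<psi> x"
proof -
  interpret prob_space M by (rule M)
  have [measurable]: "Q \<in> borel_measurable borel" "fourier \<psi> \<in> borel_measurable borel"
    using Q \<psi>(2) by (simp_all add: borel_measurable_integrable)
  have [measurable]: "charfun M V \<in> borel_measurable borel"
    unfolding charfun_def[abs_def] by measurable
  have "AE \<omega> in lborel. Q \<omega> * charfun M V (- \<omega>) = fourier \<psi> \<omega>"
    using charfun_nonzero by eventually_elim (rule deconvolves, simp add: charfun_uminus)
  then have "(\<integral>\<omega>. cis (- (\<omega> \<bullet> x)) * (Q \<omega> * charfun M V (- \<omega>)) \<partial>lborel)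
      = (\<integral>\<omega>. cis (- (\<omega> \<bullet> x)) * fourier \<psi> \<omega> \<partial>lborel)"
    by (intro integral_cong_AE) auto
  then have "inv_fourier (\<lambda>\<omega>. Q \<omega> * charfun M V (- \<omega>)) x = inv_fourier (fourier \<psi>) x"
    by (simp add: inv_fourier_def)
  then show ?thesis
    using integral_inv_fourier_translate[OF M _ Q] fourier_inversion[OF \<psi>] by simp
qed

lemma distributed_integral_scaleR:
  fixes h :: "'a::euclidean_space \<Rightarrow> 'c::{banach, second_countable_topology}"
  assumes V: "distributed M lborel V (\<lambda>x. ennreal (f x))" and f: "\<And>x. 0 \<le> f x"
    and [measurable]: "h \<in> borel_measurable borel"
  shows "(\<integral>m. h (V m) \<partial>M) = (\<integral>u. f u *\<^sub>R h u \<partial>lborel)"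
proof -
  have [measurable]: "V \<in> borel_measurable M" "f \<in> borel_measurable borel"
    using distributed_measurable[OF V] distributed_real_measurable[OF f V] by simp_all
  have "(\<integral>m. h (V m) \<partial>M) = integral\<^sup>L (distr M lborel V) h"
    by (subst integral_distr) auto
  also have "\<dots> = (\<integral>u. f u *\<^sub>R h u \<partial>lborel)"
    unfolding distributed_distr_eq_density[OF V] by (subst integral_density) (auto simp: f)
  finally show ?thesis .
qed

lemma
  assumes "prob_space M" and V: "distributed M lborel V (\<lambda>x. ennreal (f x))" and f: "\<And>x. 0 \<le> f x"
  shows integrable_density_translate: "integrable lborel (\<lambda>z. f (z - x))"
    and integral_density_translate: "(\<integral>z. f (z - x) \<partial>lborel) = 1"
proof -
  interpret prob_space M by fact
  have [measurable]: "f \<in> borel_measurable borel"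
    using distributed_real_measurable[OF f V] by simp
  have "integrable lborel f"
    using distributed_integrable[OF V, of "\<lambda>_. 1"] f by simp
  moreover have "(\<integral>z. f z \<partial>lborel) = 1"
    using distributed_integral[OF V, of "\<lambda>_. 1"] f prob_space by simp
  ultimately show "integrable lborel (\<lambda>z. f (z - x))" "(\<integral>z. f (z - x) \<partial>lborel) = 1"
    using lborel_integral_translate[of f "- x"] lborel_integrable_translate_iff[of f "- x"] by simp_all
qed

lemma
  fixes h :: "'a::euclidean_space \<Rightarrow> complex"
  assumes M: "prob_space M" and V: "distributed M lborel V (\<lambda>x. ennreal (f x))" and f: "\<And>x. 0 \<le> f x"
    and [measurable]: "h \<in> borel_measurable borel" and h_bounded: "\<And>z. norm (h z) \<le> B"
    and \<mu>: "finite_measure \<mu>" and [measurable_cong]: "sets \<mu> = sets borel"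
  shows integrable_mult_density_convolution:
      "integrable lborel (\<lambda>z. h z * complex_of_real (\<integral>x. f (z - x) \<partial>\<mu>))"
    and integral_mult_density_convolution:
      "(\<integral>z. h z * complex_of_real (\<integral>x. f (z - x) \<partial>\<mu>) \<partial>lborel) = (\<integral>x. (\<integral>m. h (x + V m) \<partial>M) \<partial>\<mu>)"
proof -
  interpret \<mu>: finite_measure \<mu> by (rule \<mu>)
  interpret \<mu>L: pair_sigma_finite \<mu> "lborel :: 'a measure"
    by (intro pair_sigma_finite.intro \<mu>.sigma_finite_measure_axioms lborel.sigma_finite_measure_axioms)
  interpret L\<mu>: pair_sigma_finite "lborel :: 'a measure" \<mu>
    by (intro pair_sigma_finite.intro \<mu>.sigma_finite_measure_axioms lborel.sigma_finite_measure_axioms)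
  have [measurable]: "f \<in> borel_measurable borel"
    using distributed_real_measurable[OF f V] by simp
  define F where "F x z = h z * complex_of_real (f (z - x))" for x z :: 'a
  have F_bound: "norm (F x z) \<le> B * f (z - x)" for x z
    unfolding F_def by (simp add: norm_mult f mult_right_mono h_bounded)
  have F_measurable[measurable]: "(\<lambda>(x, z). F x z) \<in> borel_measurable (\<mu> \<Otimes>\<^sub>M lborel)"
    unfolding F_def by measurable
  have F_slice_integrable: "integrable lborel (F x)" for x
  proof (rule Bochner_Integration.integrable_bound)
    show "integrable lborel (\<lambda>z. B * f (z - x))"
      using integrable_density_translate[OF M V f, of x] by simp
    show "F x \<in> borel_measurable lborel"
      unfolding F_def by measurable
    show "AE z in lborel. norm (F x z) \<le> norm (B * f (z - x))"
      by (intro AE_I2 order_trans[OF F_bound]) simp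
  qed
  have F_slice_norm: "(\<integral>z. norm (F x z) \<partial>lborel) \<le> B" for x
  proof -
    have "(\<integral>z. norm (F x z) \<partial>lborel) \<le> (\<integral>z. B * f (z - x) \<partial>lborel)"
      using F_slice_integrable integrable_density_translate[OF M V f]
      by (intro integral_mono) (auto simp: F_bound)
    then show ?thesis
      by (simp add: integral_density_translate[OF M V f])
  qed
  have F_integrable: "integrable (\<mu> \<Otimes>\<^sub>M lborel) (\<lambda>(x, z). F x z)"
  proof (rule \<mu>L.Fubini_integrable[OF F_measurable])
    show "integrable \<mu> (\<lambda>x. \<integral>z. norm ((\<lambda>(x, z). F x z) (x, z)) \<partial>lborel)"
    proof (rule \<mu>.integrable_const_bound[where B=B])
      show "AE x in \<mu>. norm (\<integral>z. norm ((\<lambda>(x, z). F x z) (x, z)) \<partial>lborel) \<le> B"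
        using F_slice_norm by (intro AE_I2) (simp add: integral_nonneg)
    qed measurable
    show "AE x in \<mu>. integrable lborel (\<lambda>z. (\<lambda>(x, z). F x z) (x, z))"
      using F_slice_integrable by simp
  qed
  have F_slice_integral: "(\<integral>z. F x z \<partial>lborel) = (\<integral>m. h (x + V m) \<partial>M)" for x
  proof -
    have "(\<integral>z. F x z \<partial>lborel) = (\<integral>u. F x (u + x) \<partial>lborel)"
      by (rule lborel_integral_translate[symmetric]) (simp add: F_def)
    also have "\<dots> = (\<integral>u. f u *\<^sub>R h (x + u) \<partial>lborel)"
      unfolding F_def by (simp add: scaleR_conv_of_real add.commute mult.commute)
    also have "\<dots> = (\<integral>m. h (x + V m) \<partial>M)"
      by (rule distributed_integral_scaleR[OF V f, symmetric]) simp
    finally show ?thesis .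
  qed
  have convolution: "(\<integral>x. F x z \<partial>\<mu>) = h z * complex_of_real (\<integral>x. f (z - x) \<partial>\<mu>)" for z
    unfolding F_def by simp
  show "integrable lborel (\<lambda>z. h z * complex_of_real (\<integral>x. f (z - x) \<partial>\<mu>))"
    using L\<mu>.integrable_fst'[OF \<mu>L.integrable_product_swap[OF F_integrable]]
    unfolding convolution[symmetric] by simp
  have "(\<integral>z. (\<integral>x. F x z \<partial>\<mu>) \<partial>lborel) = (\<integral>x. (\<integral>z. F x z \<partial>lborel) \<partial>\<mu>)"
    using \<mu>L.Fubini_integral[of F] F_integrable by simp
  then show "(\<integral>z. h z * complex_of_real (\<integral>x. f (z - x) \<partial>\<mu>) \<partial>lborel) = (\<integral>x. (\<integral>m. h (x + V m) \<partial>M) \<partial>\<mu>)"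
    unfolding convolution F_slice_integral .
qed

lemma integral_mult_conv_signed:
  fixes h :: "'a::euclidean_space \<Rightarrow> complex"
  assumes M: "prob_space M" and V: "distributed M lborel V (\<lambda>x. ennreal (f x))" and f: "\<And>x. 0 \<le> f x"
    and h: "h \<in> borel_measurable borel" and h_bounded: "\<And>z. norm (h z) \<le> B"
    and \<mu>1: "finite_measure \<mu>1" "sets \<mu>1 = sets borel" and \<mu>2: "finite_measure \<mu>2" "sets \<mu>2 = sets borel"
  shows "(\<integral>z. h z * complex_of_real (conv_signed f \<mu>1 \<mu>2 z) \<partial>lborel)
       = (\<integral>x. (\<integral>m. h (x + V m) \<partial>M) \<partial>\<mu>1) - (\<integral>x. (\<integral>m. h (x + V m) \<partial>M) \<partial>\<mu>2)"
proof -
  have "(\<lambda>z. h z * complex_of_real (conv_signed f \<mu>1 \<mu>2 z))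
      = (\<lambda>z. h z * complex_of_real (\<integral>x. f (z - x) \<partial>\<mu>1) - h z * complex_of_real (\<integral>x. f (z - x) \<partial>\<mu>2))"
    by (simp add: conv_signed_def right_diff_distrib)
  then show ?thesis
    using integrable_mult_density_convolution[OF M V f h h_bounded \<mu>1]
      integrable_mult_density_convolution[OF M V f h h_bounded \<mu>2]
      integral_mult_density_convolution[OF M V f h h_bounded \<mu>1]
      integral_mult_density_convolution[OF M V f h h_bounded \<mu>2]
    by (simp add: Bochner_Integration.integral_diff)
qed

lemma integral_indep_var_pair:
  fixes X V :: "'b \<Rightarrow> 'x::topological_space" and h :: "'x \<times> 'x \<Rightarrow> 'c::{banach, second_countable_topology}"
  assumes M: "prob_space M" and indep: "prob_space.indep_var M borel X borel V"
    and [measurable]: "h \<in> borel_measurable (borel \<Otimes>\<^sub>M borel)" and h_bounded: "\<And>p. norm (h p) \<le> B"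
  shows "(\<integral>m. h (X m, V m) \<partial>M) = (\<integral>x. (\<integral>m. h (x, V m) \<partial>M) \<partial>distr M borel X)"
proof -
  interpret prob_space M by (rule M)
  have [measurable]: "X \<in> borel_measurable M" "V \<in> borel_measurable M"
    using indep by (auto dest: indep_var_rv1 indep_var_rv2)
  interpret PX: prob_space "distr M borel X" by (rule prob_space_distr) simp
  interpret PV: prob_space "distr M borel V" by (rule prob_space_distr) simp
  interpret PXV: pair_sigma_finite "distr M borel X" "distr M borel V" ..
  have product: "distr M borel X \<Otimes>\<^sub>M distr M borel V = distr M (borel \<Otimes>\<^sub>M borel) (\<lambda>m. (X m, V m))"
    using indep by (simp add: indep_var_distribution_eq)
  have "integrable M (\<lambda>m. h (X m, V m))"
    using h_bounded by (intro integrable_const_bound[where B=B]) auto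
  then have "integrable (distr M borel X \<Otimes>\<^sub>M distr M borel V) h"
    unfolding product by (subst integrable_distr_eq) auto
  then have "(\<integral>x. (\<integral>v. h (x, v) \<partial>distr M borel V) \<partial>distr M borel X) = integral\<^sup>L (distr M borel X \<Otimes>\<^sub>M distr M borel V) h"
    by (rule PXV.integral_fst')
  also have "\<dots> = (\<integral>m. h (X m, V m) \<partial>M)"
    unfolding product by (subst integral_distr) auto
  finally show ?thesis
    by (simp add: integral_distr)
qed

theorem proposition5:
  fixes M :: "'b measure" and X V :: "'b \<Rightarrow> 'a::euclidean_space"
    and fV :: "'a \<Rightarrow> real" and g :: "'a \<Rightarrow> real" and y :: 'a
  assumes "prob_space M"
    and "X \<in> borel_measurable M" and "V \<in> borel_measurable M"
    and "prob_space.indep_var M borel X borel V"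
    and "fV \<in> borel_measurable lborel" and "\<And>x. fV x \<ge> 0"
    and "distributed M lborel V (\<lambda>x. ennreal (fV x))"
    and "AE \<omega> in lborel. charfun M V \<omega> \<noteq> 0"
    and "g \<in> borel_measurable borel"
    and "lam g fV y \<in> Xi0"
    and "integrable lborel (fourier (lam g fV y))"
    and "integrable lborel (Qfun M V g fV y)"
  shows "(\<forall>\<mu>1 \<mu>2. finite_measure \<mu>1 \<and> finite_measure \<mu>2 \<and>
             sets \<mu>1 = sets borel \<and> sets \<mu>2 = sets borel \<longrightarrow>
           T_signed g fV y \<mu>1 \<mu>2 =
             (LINT z|lborel. inv_fourier (Qfun M V g fV y) z * complex_of_real (conv_signed fV \<mu>1 \<mu>2 z)))
       \<and> (\<forall>z. Im (inv_fourier (Qfun M V g fV y) z) = 0)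
       \<and> (densY M X fV y > 0 \<longrightarrow>
           complex_of_real (cond_exp_at M X fV g y) =
             complex_of_real (1 / densY M X fV y) *
               (LINT z|lborel. inv_fourier (Qfun M V g fV y) z * complex_of_real (densY M X fV z))
           \<and> complex_of_real (cond_exp_at M X fV g y) =
             complex_of_real (1 / densY M X fV y) *
               (LINT m|M. inv_fourier (Qfun M V g fV y) (X m + V m)))"
proof -
  interpret prob_space M by fact
  let ?Q = "Qfun M V g fV y" and ?q = "inv_fourier (Qfun M V g fV y)"
  have [measurable]: "?Q \<in> borel_measurable borel"
    using assms(12) by (simp add: borel_measurable_integrable)
  have q_measurable[measurable]: "?q \<in> borel_measurable borel"
    unfolding inv_fourier_def[abs_def] by measurable
  obtain B where q_bounded: "\<And>z. norm (?q z) \<le> B"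
    using norm_inv_fourier_le by blast
  have deconvolution: "(\<integral>m. ?q (x + V m) \<partial>M) = lam g fV y x" for x
    using assms(1,3,8,10-12) by (rule integral_inv_fourier_deconvolution[OF _ _ _ _ _ _ Qfun_mult_charfun])
  have independence: "(\<integral>m. ?q (X m + V m) \<partial>M) = (\<integral>x. lam g fV y x \<partial>distr M borel X)"
    using integral_indep_var_pair[OF assms(1,4), where h="\<lambda>(a, b). ?q (a + b)" and B=B]
    by (simp add: deconvolution q_bounded case_prod_beta)
  have real: "Im (?q z) = 0" for z
    by (rule Im_inv_fourier_eq_0) (measurable, rule Qfun_uminus)
  have signed: "T_signed g fV y \<mu>1 \<mu>2 = (\<integral>z. ?q z * complex_of_real (conv_signed fV \<mu>1 \<mu>2 z) \<partial>lborel)"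
    if "finite_measure \<mu>1" "finite_measure \<mu>2" "sets \<mu>1 = sets borel" "sets \<mu>2 = sets borel" for \<mu>1 \<mu>2
    using integral_mult_conv_signed[OF assms(1,7,6) q_measurable q_bounded that(1,3,2,4)]
    by (simp add: T_signed_def deconvolution)
  have "finite_measure (distr M borel X)"
    using assms(2) by (intro prob_space.axioms(1) prob_space_distr) simp
  then have density_Y: "(\<integral>z. ?q z * complex_of_real (densY M X fV z) \<partial>lborel) = (\<integral>x. lam g fV y x \<partial>distr M borel X)"
    using integral_mult_density_convolution[OF assms(1,7,6) q_measurable q_bounded, of "distr M borel X"]
    by (simp add: densY_def deconvolution)
  have "complex_of_real (cond_exp_at M X fV g y)
      = complex_of_real (1 / densY M X fV y) * (\<integral>x. lam g fV y x \<partial>distr M borel X)"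
    unfolding cond_exp_at_def lam_def integral_complex_of_real by (rule of_real_mult)
  then show ?thesis
    using signed real density_Y independence by auto
qed

end
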